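(* Let $\Gamma$ be a metric graph as described in the context, let $A\subset\Gamma$ be a closed set and let $f\colon A\to\mathbb{R}$ be bounded. Let $u^*_f$ be the convex envelope of $f$. Then $u^*_f$ is bounded on $\Gamma$ if and only if $A$ contains every terminal node of $\Gamma$. In this case, \[ \inf_A f\le u^*_f(x)\le \sup_A f\qquad\text{for all } x\in\Gamma. \]
   Context: $\Gamma$ is a metric graph: a finite, connected, simple graph with vertex set $\mathrm{V}$ and edge set $\mathrm{E}$ (each vertex has degree between $1$ and some finite bound), each edge $\mathrm{e}$ being identified with an interval $[0,\ell_{\mathrm{e}}]$ of positive length, endpoints identified with the two vertices of $\mathrm{e}$. $\Gamma$ is regarded as a connected compact metric space with the path distance $d(x,y)$ (length of a shortest path in $\Gamma$ from $x$ to $y$); it is assumed that for $x,y$ on the same edge, $d(x,y)=|x-y|$. For $x,y\in\Gamma$, $[x,y]$ denotes the minimal path between $x$ and $y$. The degree of a vertex is the number of edges incident to it; a vertex of degree $1$ is called terminal (exterior). A function $u\colon\Gamma\to\mathbb{R}$ is convex if for all $x,y\in\Gamma$ and all $z\in[x,y]$, $u(z)\le \frac{d(y,z)}{d(x,y)}u(x)+\frac{d(x,z)}{d(x,y)}u(y)$. The convex envelope of $f\colon A\to\mathbb{R}$ is $u^*_f(x)=\sup\{u(x): u\colon\Gamma\to\mathbb{R}\text{ convex},\ u\le f \text{ on } A\}$. *)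

theory Defs
  imports "HOL-Analysis.Analysis" "HOL-Library.Extended_Real"
begin

text \<open>Each (undirected) edge is stored once, as an ordered pair (a,b); the edge is
identified with the interval [0, l (a,b)], 0 corresponding to a and l (a,b) to b.\<close>

datatype 'v gpoint = Vtx 'v | Edg "'v \<times> 'v" real

definition metric_graph :: "'v set \<Rightarrow> ('v \<times> 'v) set \<Rightarrow> ('v \<times> 'v \<Rightarrow> real) \<Rightarrow> bool" where
  "metric_graph V E l \<longleftrightarrow> finite V \<and> E \<subseteq> V \<times> V
     \<and> (\<forall>(a,b)\<in>E. a \<noteq> b \<and> (b,a) \<notin> E)
     \<and> (\<forall>e\<in>E. l e > 0)"

definition adjacent :: "('v \<times> 'v) set \<Rightarrow> 'v \<Rightarrow> 'v \<Rightarrow> bool" where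
  "adjacent E a b \<longleftrightarrow> (a,b) \<in> E \<or> (b,a) \<in> E"

definition wlen :: "('v \<times> 'v) set \<Rightarrow> ('v \<times> 'v \<Rightarrow> real) \<Rightarrow> 'v \<Rightarrow> 'v \<Rightarrow> real" where
  "wlen E l a b = (if (a,b) \<in> E then l (a,b) else l (b,a))"

definition is_walk :: "'v set \<Rightarrow> ('v \<times> 'v) set \<Rightarrow> 'v list \<Rightarrow> bool" where
  "is_walk V E xs \<longleftrightarrow> xs \<noteq> [] \<and> set xs \<subseteq> V
     \<and> (\<forall>i. Suc i < length xs \<longrightarrow> adjacent E (xs ! i) (xs ! Suc i))"

definition walk_length :: "('v \<times> 'v) set \<Rightarrow> ('v \<times> 'v \<Rightarrow> real) \<Rightarrow> 'v list \<Rightarrow> real" where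
  "walk_length E l xs = (\<Sum>i<length xs - 1. wlen E l (xs ! i) (xs ! Suc i))"

definition graph_connected :: "'v set \<Rightarrow> ('v \<times> 'v) set \<Rightarrow> bool" where
  "graph_connected V E \<longleftrightarrow> (\<forall>a\<in>V. \<forall>b\<in>V. \<exists>xs. is_walk V E xs \<and> hd xs = a \<and> last xs = b)"

definition vdist :: "'v set \<Rightarrow> ('v \<times> 'v) set \<Rightarrow> ('v \<times> 'v \<Rightarrow> real) \<Rightarrow> 'v \<Rightarrow> 'v \<Rightarrow> real" where
  "vdist V E l a b = Inf {walk_length E l xs | xs. is_walk V E xs \<and> hd xs = a \<and> last xs = b}"

definition degree :: "('v \<times> 'v) set \<Rightarrow> 'v \<Rightarrow> nat" where
  "degree E v = card {e\<in>E. fst e = v \<or> snd e = v}"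

definition terminal :: "'v set \<Rightarrow> ('v \<times> 'v) set \<Rightarrow> 'v \<Rightarrow> bool" where
  "terminal V E v \<longleftrightarrow> v \<in> V \<and> degree E v = 1"

definition points :: "'v set \<Rightarrow> ('v \<times> 'v) set \<Rightarrow> ('v \<times> 'v \<Rightarrow> real) \<Rightarrow> 'v gpoint set" where
  "points V E l = Vtx ` V \<union> {Edg e t | e t. e \<in> E \<and> 0 < t \<and> t < l e}"

definition edge_pt :: "('v \<times> 'v \<Rightarrow> real) \<Rightarrow> 'v \<times> 'v \<Rightarrow> real \<Rightarrow> 'v gpoint" where
  "edge_pt l e t = (if t = 0 then Vtx (fst e) else if t = l e then Vtx (snd e) else Edg e t)"

fun ends :: "('v \<times> 'v \<Rightarrow> real) \<Rightarrow> 'v gpoint \<Rightarrow> ('v \<times> real) set" where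
  "ends l (Vtx v) = {(v, 0)}"
| "ends l (Edg e t) = {(fst e, t), (snd e, l e - t)}"

text \<open>Path distance on the metric graph: a shortest path either stays inside a common
edge, or leaves the edges of the two points through endpoints.\<close>
definition gdist :: "'v set \<Rightarrow> ('v \<times> 'v) set \<Rightarrow> ('v \<times> 'v \<Rightarrow> real) \<Rightarrow> 'v gpoint \<Rightarrow> 'v gpoint \<Rightarrow> real" where
  "gdist V E l p q =
     (let via = Min {r + vdist V E l u w + s | u r w s. (u, r) \<in> ends l p \<and> (w, s) \<in> ends l q}
      in (case (p, q) of
            (Edg e t, Edg e' s) \<Rightarrow> (if e = e' then min \<bar>t - s\<bar> via else via)
          | _ \<Rightarrow> via))"

definition on_geodesic :: "'v set \<Rightarrow> ('v \<times> 'v) set \<Rightarrow> ('v \<times> 'v \<Rightarrow> real) \<Rightarrow> 'v gpoint \<Rightarrow> 'v gpoint \<Rightarrow> 'v gpoint \<Rightarrow> bool" where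
  "on_geodesic V E l x y z \<longleftrightarrow> z \<in> points V E l \<and>
     gdist V E l x z + gdist V E l z y = gdist V E l x y"

definition graph_convex :: "'v set \<Rightarrow> ('v \<times> 'v) set \<Rightarrow> ('v \<times> 'v \<Rightarrow> real) \<Rightarrow> ('v gpoint \<Rightarrow> real) \<Rightarrow> bool" where
  "graph_convex V E l u \<longleftrightarrow>
     (\<forall>x\<in>points V E l. \<forall>y\<in>points V E l. \<forall>z. x \<noteq> y \<and> on_geodesic V E l x y z \<longrightarrow>
        u z \<le> gdist V E l y z / gdist V E l x y * u x + gdist V E l x z / gdist V E l x y * u y)"

definition graph_closed :: "'v set \<Rightarrow> ('v \<times> 'v) set \<Rightarrow> ('v \<times> 'v \<Rightarrow> real) \<Rightarrow> 'v gpoint set \<Rightarrow> bool" where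
  "graph_closed V E l A \<longleftrightarrow> A \<subseteq> points V E l \<and>
     (\<forall>x\<in>points V E l. (\<forall>\<epsilon>>0. \<exists>a\<in>A. gdist V E l x a < \<epsilon>) \<longrightarrow> x \<in> A)"

text \<open>Convex envelope, valued in the extended reals (it may be +\<infinity>).\<close>
definition convex_envelope :: "'v set \<Rightarrow> ('v \<times> 'v) set \<Rightarrow> ('v \<times> 'v \<Rightarrow> real) \<Rightarrow> 'v gpoint set
    \<Rightarrow> ('v gpoint \<Rightarrow> real) \<Rightarrow> 'v gpoint \<Rightarrow> ereal" where
  "convex_envelope V E l A f x =
     (SUP u \<in> {u. graph_convex V E l u \<and> (\<forall>a\<in>A. u a \<le> f a)}. ereal (u x))"

end

theory Submission
  imports Defs
begin

text \<open>Constant functions are convex, so the envelope is at least \<open>inf f\<close>.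

  Along an edge a convex u lies below its chords, so u attains its maximum m at a vertex. A
  non-terminal vertex is the midpoint of a geodesic between points on two of its edges; hence if u
  is maximal there, it is maximal on every incident edge and at every neighbour. If all terminal
  vertices lie in A and \<open>m > sup f\<close>, no maximal vertex lies in A, so none is terminal; by
  connectedness u = m everywhere, including on A, which is absurd.

  Conversely, a terminal vertex v outside the closed set A has positive distance r from A, and near v
  the graph looks like a half-line with endpoint v. The bumps \<open>c + K * max 0 (r - d(v, \<cdot>))\<close>
  are therefore convex minorants of f for every K, and the envelope is infinite at v.\<close>

lemma is_walk_Nil [simp]: "\<not> is_walk V E []"
  by (simp add: is_walk_def)

lemma is_walk_singleton [simp]: "is_walk V E [a] \<longleftrightarrow> a \<in> V"
  by (simp add: is_walk_def)

lemma is_walk_Cons_Cons [simp]: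
  "is_walk V E (a # b # xs) \<longleftrightarrow> a \<in> V \<and> adjacent E a b \<and> is_walk V E (b # xs)"
  unfolding is_walk_def by (auto simp: nth_Cons split: nat.splits)

lemma walk_length_singleton [simp]: "walk_length E l [a] = 0"
  by (simp add: walk_length_def)

lemma walk_length_Cons_Cons [simp]:
  "walk_length E l (a # b # xs) = wlen E l a b + walk_length E l (b # xs)"
  unfolding walk_length_def by (simp add: sum.lessThan_Suc_shift del: sum.lessThan_Suc)

lemma adjacent_sym: "adjacent E a b \<longleftrightarrow> adjacent E b a"
  by (auto simp: adjacent_def)

lemma wlen_sym: "metric_graph V E l \<Longrightarrow> adjacent E a b \<Longrightarrow> wlen E l a b = wlen E l b a"
  unfolding metric_graph_def adjacent_def wlen_def by fastforce

lemma walk_join: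
  assumes "is_walk V E xs" "is_walk V E ys" "last xs = hd ys"
  shows "is_walk V E (xs @ tl ys) \<and> walk_length E l (xs @ tl ys) = walk_length E l xs + walk_length E l ys"
  using assms
proof (induction xs rule: induct_list012)
  case (2 a)
  then show ?case by (cases ys) auto
qed auto

lemma walk_snoc:
  assumes "is_walk V E (ys @ [b])" "ys \<noteq> []"
  shows "is_walk V E ys \<and> adjacent E (last ys) b \<and>
         walk_length E l (ys @ [b]) = walk_length E l ys + wlen E l (last ys) b"
  using assms
proof (induction ys)
  case (Cons a ys)
  then show ?case by (cases ys) auto
qed simp

lemma walk_rev:
  assumes "metric_graph V E l" "is_walk V E xs"
  shows "is_walk V E (rev xs) \<and> walk_length E l (rev xs) = walk_length E l xs"
  using assms(2)
proof (induction xs rule: induct_list012)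
  case (3 a b xs)
  then have "is_walk V E [b, a]" "b \<in> V"
    by (auto simp: adjacent_sym is_walk_def)
  with 3 walk_join[of V E "rev (b # xs)" "[b, a]" l] wlen_sym[OF assms(1), of a b]
  show ?case by auto
qed auto

lemma walk_last_closed:
  assumes "is_walk V E xs" "P (hd xs)" "\<And>a b. a \<in> V \<Longrightarrow> P a \<Longrightarrow> adjacent E a b \<Longrightarrow> P b"
  shows "P (last xs)"
  using assms(1,2)
proof (induction xs)
  case (Cons a xs)
  then show ?case by (cases xs) (use assms(3) in auto)
qed simp

lemma connected_adjacency_closed:
  assumes "graph_connected V E" "a \<in> V" "b \<in> V" "P a"
    and "\<And>x y. x \<in> V \<Longrightarrow> P x \<Longrightarrow> adjacent E x y \<Longrightarrow> P y"
  shows "P b"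
proof -
  obtain xs where "is_walk V E xs" "hd xs = a" "last xs = b"
    using assms(1-3) unfolding graph_connected_def by blast
  then show ?thesis using walk_last_closed[of V E xs P] assms(4,5) by blast
qed

locale connected_metric_graph =
  fixes V :: "'v set" and E :: "('v \<times> 'v) set" and l :: "'v \<times> 'v \<Rightarrow> real"
  assumes is_metric_graph: "metric_graph V E l"
    and connected: "graph_connected V E"
    and no_isolated_vertex: "\<forall>v\<in>V. degree E v \<ge> 1"
    and edge_isometric: "\<forall>e\<in>E. \<forall>t\<in>{0..l e}. \<forall>s\<in>{0..l e}.
                           gdist V E l (edge_pt l e t) (edge_pt l e s) = \<bar>t - s\<bar>"
begin

abbreviation \<Gamma> where "\<Gamma> \<equiv> points V E l"
abbreviation \<rho> where "\<rho> \<equiv> gdist V E l"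

lemma finite_V: "finite V" and E_subset: "E \<subseteq> V \<times> V" and edge_length_pos: "e \<in> E \<Longrightarrow> l e > 0"
  and edge_irrefl: "(a, b) \<in> E \<Longrightarrow> a \<noteq> b" and edge_asym: "(a, b) \<in> E \<Longrightarrow> (b, a) \<notin> E"
  using is_metric_graph unfolding metric_graph_def by auto

lemma finite_E: "finite E"
  using finite_V E_subset finite_subset by blast

lemma wlen_pos: "adjacent E a b \<Longrightarrow> wlen E l a b > 0"
  using edge_length_pos by (auto simp: adjacent_def wlen_def)

lemma wlen_ge_Min: "adjacent E a b \<Longrightarrow> Min (l ` E) \<le> wlen E l a b"
  using finite_E by (auto simp: adjacent_def wlen_def)

lemma walk_length_nonneg: "is_walk V E xs \<Longrightarrow> walk_length E l xs \<ge> 0"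
proof (induction xs)
  case (Cons a xs)
  then show ?case by (cases xs) (auto simp: wlen_pos less_imp_le add_nonneg_nonneg)
qed simp

lemma vdist_le_walk_length:
  assumes "is_walk V E xs" "hd xs = a" "last xs = b"
  shows "vdist V E l a b \<le> walk_length E l xs"
  unfolding vdist_def using assms walk_length_nonneg
  by (intro cInf_lower bdd_belowI[of _ 0]) auto

lemma vdist_greatest:
  assumes "a \<in> V" "b \<in> V"
    and "\<And>xs. is_walk V E xs \<Longrightarrow> hd xs = a \<Longrightarrow> last xs = b \<Longrightarrow> c \<le> walk_length E l xs"
  shows "c \<le> vdist V E l a b"
  unfolding vdist_def using assms connected unfolding graph_connected_def
  by (intro cInf_greatest) blast+

lemma vdist_nonneg: "a \<in> V \<Longrightarrow> b \<in> V \<Longrightarrow> vdist V E l a b \<ge> 0"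
  by (rule vdist_greatest) (auto simp: walk_length_nonneg)

lemma vdist_self: "a \<in> V \<Longrightarrow> vdist V E l a a = 0"
  using vdist_le_walk_length[of "[a]" a a] vdist_nonneg[of a a] by simp

lemma vdist_sym: "a \<in> V \<Longrightarrow> b \<in> V \<Longrightarrow> vdist V E l a b = vdist V E l b a"
proof -
  have le: "vdist V E l a b \<le> vdist V E l b a" if "a \<in> V" "b \<in> V" for a b
  proof (rule vdist_greatest[OF that(2,1)])
    fix xs assume xs: "is_walk V E xs" "hd xs = b" "last xs = a"
    then show "vdist V E l a b \<le> walk_length E l xs"
      using walk_rev[OF is_metric_graph xs(1)] vdist_le_walk_length[of "rev xs" a b]
      by (simp add: hd_rev last_rev)
  qed
  show "a \<in> V \<Longrightarrow> b \<in> V \<Longrightarrow> ?thesis" using le[of a b] le[of b a] by simp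
qed

lemma vdist_triangle:
  assumes "a \<in> V" "b \<in> V" "c \<in> V"
  shows "vdist V E l a c \<le> vdist V E l a b + vdist V E l b c"
proof -
  have "vdist V E l a c - walk_length E l ys \<le> vdist V E l a b"
    if ys: "is_walk V E ys" "hd ys = b" "last ys = c" for ys
  proof (rule vdist_greatest[OF assms(1,2)])
    fix xs assume xs: "is_walk V E xs" "hd xs = a" "last xs = b"
    have "last (xs @ tl ys) = c"
      using xs ys by (cases ys; cases "tl ys") auto
    moreover have "hd (xs @ tl ys) = a"
      using xs by (cases xs) auto
    ultimately show "vdist V E l a c - walk_length E l ys \<le> walk_length E l xs"
      using walk_join[OF xs(1) ys(1), of l] vdist_le_walk_length[of "xs @ tl ys" a c] xs ys by simp
  qed
  then have "vdist V E l a c - vdist V E l a b \<le> vdist V E l b c"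
    by (intro vdist_greatest[OF assms(2,3)]) fastforce
  then show ?thesis by linarith
qed

lemma vdist_pos:
  assumes "a \<in> V" "b \<in> V" "a \<noteq> b"
  shows "vdist V E l a b > 0"
proof -
  have "E \<noteq> {}"
    using assms(1) no_isolated_vertex by (fastforce simp: degree_def)
  then have Min_pos: "Min (l ` E) > 0"
    using finite_E edge_length_pos by (subst Min_gr_iff) auto
  have "Min (l ` E) \<le> vdist V E l a b"
  proof (rule vdist_greatest[OF assms(1,2)])
    fix xs assume xs: "is_walk V E xs" "hd xs = a" "last xs = b"
    then obtain c ys where "xs = a # c # ys"
      using assms(3) by (cases xs; cases "tl xs") auto
    then show "Min (l ` E) \<le> walk_length E l xs"
      using xs wlen_ge_Min[of a c] walk_length_nonneg[of "c # ys"] by fastforce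
  qed
  with Min_pos show ?thesis by linarith
qed

definition via_dist :: "'v gpoint \<Rightarrow> 'v gpoint \<Rightarrow> real" where
  "via_dist p q = Min ((\<lambda>((u, r), (w, s)). r + vdist V E l u w + s) ` (ends l p \<times> ends l q))"

lemma finite_ends: "finite (ends l p)" and ends_nonempty: "ends l p \<noteq> {}"
  by (cases p; simp)+

lemma gdist_eq_via_dist:
  "\<rho> p q = (case (p, q) of
      (Edg e t, Edg e' s) \<Rightarrow> (if e = e' then min \<bar>t - s\<bar> (via_dist p q) else via_dist p q)
    | _ \<Rightarrow> via_dist p q)"
proof -
  have via_set: "{r + vdist V E l u w + s | u r w s. (u, r) \<in> ends l p \<and> (w, s) \<in> ends l q}
        = (\<lambda>((u, r), (w, s)). r + vdist V E l u w + s) ` (ends l p \<times> ends l q)"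
    by force
  show ?thesis unfolding gdist_def Let_def via_set via_dist_def by simp
qed

lemma gdist_via_dist: "\<nexists>e t s. p = Edg e t \<and> q = Edg e s \<Longrightarrow> \<rho> p q = via_dist p q"
  unfolding gdist_eq_via_dist by (cases p; cases q) auto

lemma gdist_le_via_dist: "\<rho> p q \<le> via_dist p q"
  unfolding gdist_eq_via_dist by (cases p; cases q) auto

lemma via_dist_le: "(u, r) \<in> ends l p \<Longrightarrow> (w, s) \<in> ends l q \<Longrightarrow> via_dist p q \<le> r + vdist V E l u w + s"
  unfolding via_dist_def
  by (rule Min_le) (auto simp: finite_ends intro!: image_eqI[where x = "((u, r), (w, s))"])

lemma via_dist_attained:
  obtains u r w s where "(u, r) \<in> ends l p" "(w, s) \<in> ends l q" "via_dist p q = r + vdist V E l u w + s"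
proof -
  have "via_dist p q \<in> (\<lambda>((u, r), (w, s)). r + vdist V E l u w + s) ` (ends l p \<times> ends l q)"
    unfolding via_dist_def by (rule Min_in) (auto simp: finite_ends ends_nonempty)
  then show ?thesis using that by force
qed

lemma via_dist_greatest:
  "(\<And>u r w s. (u, r) \<in> ends l p \<Longrightarrow> (w, s) \<in> ends l q \<Longrightarrow> c \<le> r + vdist V E l u w + s)
   \<Longrightarrow> c \<le> via_dist p q"
  by (metis via_dist_attained)

lemma via_dist_Vtx [simp]: "via_dist (Vtx a) (Vtx b) = vdist V E l a b"
  by (simp add: via_dist_def)

lemma Vtx_in_points [simp]: "Vtx a \<in> \<Gamma> \<longleftrightarrow> a \<in> V"
  by (auto simp: points_def)

lemma ends_in_V: "p \<in> \<Gamma> \<Longrightarrow> (u, r) \<in> ends l p \<Longrightarrow> u \<in> V \<and> r \<ge> 0"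
  unfolding points_def using E_subset by auto

lemma via_dist_sym: "p \<in> \<Gamma> \<Longrightarrow> q \<in> \<Gamma> \<Longrightarrow> via_dist p q = via_dist q p"
proof -
  have le: "via_dist p q \<le> via_dist q p" if "p \<in> \<Gamma>" "q \<in> \<Gamma>" for p q
  proof -
    obtain u r w s where h: "(u, r) \<in> ends l q" "(w, s) \<in> ends l p"
      "via_dist q p = r + vdist V E l u w + s"
      by (rule via_dist_attained)
    have "via_dist p q \<le> s + vdist V E l w u + r" using via_dist_le[OF h(2,1)] .
    also have "\<dots> = via_dist q p" using h vdist_sym ends_in_V that by auto
    finally show ?thesis .
  qed
  show "p \<in> \<Gamma> \<Longrightarrow> q \<in> \<Gamma> \<Longrightarrow> ?thesis" using le[of p q] le[of q p] by simp
qed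

lemma gdist_sym: "p \<in> \<Gamma> \<Longrightarrow> q \<in> \<Gamma> \<Longrightarrow> \<rho> p q = \<rho> q p"
  unfolding gdist_eq_via_dist using via_dist_sym[of p q]
  by (cases p; cases q) (auto simp: abs_minus_commute)

lemma via_dist_nonneg: "p \<in> \<Gamma> \<Longrightarrow> q \<in> \<Gamma> \<Longrightarrow> via_dist p q \<ge> 0"
  by (rule via_dist_greatest) (use ends_in_V vdist_nonneg in fastforce)

lemma gdist_nonneg: "p \<in> \<Gamma> \<Longrightarrow> q \<in> \<Gamma> \<Longrightarrow> \<rho> p q \<ge> 0"
  unfolding gdist_eq_via_dist using via_dist_nonneg[of p q] by (cases p; cases q) auto

lemma gdist_self: "p \<in> \<Gamma> \<Longrightarrow> \<rho> p p = 0"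
proof (cases p)
  case (Vtx a)
  moreover assume "p \<in> \<Gamma>"
  ultimately show ?thesis using vdist_self by (simp add: gdist_via_dist)
next
  case (Edg e t)
  moreover assume "p \<in> \<Gamma>"
  ultimately show ?thesis using via_dist_nonneg[of p p] unfolding gdist_eq_via_dist by auto
qed

text \<open>Two distinct points are either distinct vertices, at positive vertex distance, or one of
  them is interior to an edge, so that every exit through an endpoint costs at least its
  distance to the nearer end of that edge.\<close>

lemma via_dist_pos:
  assumes p: "p \<in> \<Gamma>" and q: "q \<in> \<Gamma>" and "p \<noteq> q"
  shows "via_dist p q > 0"
proof (cases "\<exists>a b. p = Vtx a \<and> q = Vtx b")
  case True
  then obtain a b where "p = Vtx a" "q = Vtx b"
    by blast
  with assms show ?thesis
    using vdist_pos[of a b] by simp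
next
  case False
  then obtain e t where et: "p = Edg e t \<or> q = Edg e t"
    by (cases p; cases q) blast+
  then have c: "min t (l e - t) > 0"
    using p q unfolding points_def by auto
  have exit_cost: "min t (l e - t) \<le> r" if "(u, r) \<in> ends l (Edg e t)" for u r
    using that by auto
  have "min t (l e - t) \<le> via_dist p q"
  proof (rule via_dist_greatest)
    fix u r w s assume h: "(u, r) \<in> ends l p" "(w, s) \<in> ends l q"
    have "r \<ge> 0" "s \<ge> 0" "vdist V E l u w \<ge> 0"
      using ends_in_V[OF p h(1)] ends_in_V[OF q h(2)] vdist_nonneg by auto
    moreover have "min t (l e - t) \<le> r \<or> min t (l e - t) \<le> s"
      using et h exit_cost by blast
    ultimately show "min t (l e - t) \<le> r + vdist V E l u w + s" by linarith
  qed
  with c show ?thesis by linarith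
qed

lemma gdist_pos: "p \<in> \<Gamma> \<Longrightarrow> q \<in> \<Gamma> \<Longrightarrow> p \<noteq> q \<Longrightarrow> \<rho> p q > 0"
  unfolding gdist_eq_via_dist using via_dist_pos[of p q] by (cases p; cases q) auto

lemma gdist_triangle_Vtx:
  assumes p: "p \<in> \<Gamma>" and q: "q \<in> \<Gamma>" and w: "w \<in> V"
  shows "\<rho> p q \<le> \<rho> p (Vtx w) + \<rho> (Vtx w) q"
proof -
  obtain u r w1 s1 where h1: "(u, r) \<in> ends l p" "(w1, s1) \<in> ends l (Vtx w)"
      "via_dist p (Vtx w) = r + vdist V E l u w1 + s1"
    by (rule via_dist_attained)
  obtain u2 r2 w2 s2 where h2: "(u2, r2) \<in> ends l (Vtx w)" "(w2, s2) \<in> ends l q"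
      "via_dist (Vtx w) q = r2 + vdist V E l u2 w2 + s2"
    by (rule via_dist_attained)
  have uV: "u \<in> V" and w2V: "w2 \<in> V" using ends_in_V p q h1 h2 by auto
  have "\<rho> p q \<le> r + vdist V E l u w2 + s2"
    using gdist_le_via_dist via_dist_le[OF h1(1) h2(2)] by (rule order_trans)
  also have "\<dots> \<le> r + vdist V E l u w + vdist V E l w w2 + s2"
    using vdist_triangle[OF uV w w2V] by simp
  also have "\<dots> = \<rho> p (Vtx w) + \<rho> (Vtx w) q"
    using h1 h2 by (simp add: gdist_via_dist)
  finally show ?thesis .
qed

definition incident :: "'v \<times> 'v \<Rightarrow> 'v \<Rightarrow> bool" where
  "incident e v \<longleftrightarrow> e \<in> E \<and> (fst e = v \<or> snd e = v)"

definition other_end :: "'v \<times> 'v \<Rightarrow> 'v \<Rightarrow> 'v" where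
  "other_end e v = (if fst e = v then snd e else fst e)"

text \<open>The point of the edge e at distance \<sigma> from its endpoint v, whichever way e is stored.\<close>

definition edge_at :: "'v \<times> 'v \<Rightarrow> 'v \<Rightarrow> real \<Rightarrow> 'v gpoint" where
  "edge_at e v \<sigma> = (if fst e = v then edge_pt l e \<sigma> else edge_pt l e (l e - \<sigma>))"

lemma incident_in_V: "incident e v \<Longrightarrow> v \<in> V \<and> other_end e v \<in> V"
  using E_subset unfolding incident_def other_end_def by (cases e) auto

lemma incident_length_pos: "incident e v \<Longrightarrow> l e > 0"
  using edge_length_pos unfolding incident_def by auto

lemma edge_pt_in_points: "e \<in> E \<Longrightarrow> t \<in> {0..l e} \<Longrightarrow> edge_pt l e t \<in> \<Gamma>"
  using E_subset unfolding edge_pt_def points_def by (auto simp: less_eq_real_def)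

lemma edge_at_in_points: "incident e v \<Longrightarrow> \<sigma> \<in> {0..l e} \<Longrightarrow> edge_at e v \<sigma> \<in> \<Gamma>"
  unfolding edge_at_def incident_def by (auto intro!: edge_pt_in_points)

lemma gdist_edge_at:
  "incident e v \<Longrightarrow> \<sigma> \<in> {0..l e} \<Longrightarrow> \<tau> \<in> {0..l e} \<Longrightarrow>
   \<rho> (edge_at e v \<sigma>) (edge_at e v \<tau>) = \<bar>\<sigma> - \<tau>\<bar>"
  unfolding edge_at_def incident_def using edge_isometric by auto

lemma edge_at_0: "incident e v \<Longrightarrow> edge_at e v 0 = Vtx v"
  unfolding edge_at_def incident_def edge_pt_def using edge_length_pos[of e] by auto

lemma edge_at_length: "incident e v \<Longrightarrow> edge_at e v (l e) = Vtx (other_end e v)"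
  unfolding edge_at_def incident_def edge_pt_def other_end_def
  using edge_length_pos[of e] edge_irrefl[of "fst e" "snd e"] by auto

lemma edge_at_interior:
  "incident e v \<Longrightarrow> 0 < \<sigma> \<Longrightarrow> \<sigma> < l e \<Longrightarrow>
   (\<exists>t. edge_at e v \<sigma> = Edg e t) \<and> ends l (edge_at e v \<sigma>) = {(v, \<sigma>), (other_end e v, l e - \<sigma>)}"
  unfolding edge_at_def incident_def edge_pt_def other_end_def
  using edge_irrefl[of "fst e" "snd e"] by auto

lemma Edg_eq_edge_at:
  "Edg e t \<in> \<Gamma> \<Longrightarrow> incident e (fst e) \<and> edge_at e (fst e) t = Edg e t \<and> 0 < t \<and> t < l e"
  unfolding points_def incident_def edge_at_def edge_pt_def by auto

lemma adjacent_incident: "adjacent E a b \<Longrightarrow> \<exists>e. incident e a \<and> other_end e a = b"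
  unfolding adjacent_def incident_def other_end_def using edge_irrefl by force

lemma obtain_other_incident:
  assumes "v \<in> V" "\<not> terminal V E v" "incident e v"
  obtains e' where "incident e' v" "e' \<noteq> e"
proof -
  let ?S = "{e \<in> E. fst e = v \<or> snd e = v}"
  have "e \<in> ?S" using assms(3) unfolding incident_def by auto
  moreover have "?S \<noteq> {e}"
    using assms(1,2) unfolding terminal_def degree_def by auto
  ultimately obtain e' where "e' \<in> ?S" "e' \<noteq> e"
    by blast
  then show ?thesis using that unfolding incident_def by auto
qed

lemma gdist_edge_at_across:
  assumes e: "incident e v" and e': "incident e' v" and "e \<noteq> e'"
    and \<delta>: "0 < \<delta>" "2 * \<delta> \<le> l e" "2 * \<delta> \<le> l e'"
  shows "\<rho> (edge_at e v \<delta>) (edge_at e' v \<delta>) = 2 * \<delta>"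
proof -
  have "\<delta> < l e" "\<delta> < l e'" using \<delta> by auto
  let ?x = "edge_at e v \<delta>" and ?y = "edge_at e' v \<delta>"
  have x: "\<exists>t. ?x = Edg e t" "ends l ?x = {(v, \<delta>), (other_end e v, l e - \<delta>)}"
    and y: "\<exists>t. ?y = Edg e' t" "ends l ?y = {(v, \<delta>), (other_end e' v, l e' - \<delta>)}"
    using edge_at_interior[OF e \<delta>(1) \<open>\<delta> < l e\<close>] edge_at_interior[OF e' \<delta>(1) \<open>\<delta> < l e'\<close>] by auto
  have "\<rho> ?x ?y = via_dist ?x ?y"
    using x(1) y(1) \<open>e \<noteq> e'\<close> by (intro gdist_via_dist) auto
  moreover have "via_dist ?x ?y \<le> \<delta> + vdist V E l v v + \<delta>"
    by (rule via_dist_le) (auto simp: x y)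
  moreover have "2 * \<delta> \<le> via_dist ?x ?y"
  proof (rule via_dist_greatest)
    fix u r w s assume "(u, r) \<in> ends l ?x" "(w, s) \<in> ends l ?y"
    moreover have "v \<in> V" "other_end e v \<in> V" "other_end e' v \<in> V"
      using incident_in_V e e' by auto
    ultimately show "2 * \<delta> \<le> r + vdist V E l u w + s"
      using x y \<delta> vdist_nonneg[of u w] by auto
  qed
  ultimately show ?thesis using vdist_self incident_in_V[OF e] by simp
qed

lemma on_geodesic_edge_at:
  assumes e: "incident e v" and "\<sigma>\<^sub>1 \<in> {0..l e}" "\<sigma>\<^sub>2 \<in> {0..l e}" "\<sigma> \<in> {0..l e}"
    and "\<bar>\<sigma>\<^sub>1 - \<sigma>\<bar> + \<bar>\<sigma> - \<sigma>\<^sub>2\<bar> = \<bar>\<sigma>\<^sub>1 - \<sigma>\<^sub>2\<bar>"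
  shows "on_geodesic V E l (edge_at e v \<sigma>\<^sub>1) (edge_at e v \<sigma>\<^sub>2) (edge_at e v \<sigma>)"
  unfolding on_geodesic_def using assms edge_at_in_points[OF e] gdist_edge_at[OF e] by auto

lemma convex_along_edge:
  assumes u: "graph_convex V E l u" and e: "incident e v"
    and \<sigma>: "0 \<le> \<sigma>\<^sub>1" "\<sigma>\<^sub>1 \<le> \<sigma>" "\<sigma> \<le> \<sigma>\<^sub>2" "\<sigma>\<^sub>1 < \<sigma>\<^sub>2" "\<sigma>\<^sub>2 \<le> l e"
  shows "u (edge_at e v \<sigma>) \<le> (\<sigma>\<^sub>2 - \<sigma>) / (\<sigma>\<^sub>2 - \<sigma>\<^sub>1) * u (edge_at e v \<sigma>\<^sub>1)
                              + (\<sigma> - \<sigma>\<^sub>1) / (\<sigma>\<^sub>2 - \<sigma>\<^sub>1) * u (edge_at e v \<sigma>\<^sub>2)"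
proof -
  let ?x = "edge_at e v \<sigma>\<^sub>1" and ?y = "edge_at e v \<sigma>\<^sub>2" and ?z = "edge_at e v \<sigma>"
  have P: "?x \<in> \<Gamma>" "?y \<in> \<Gamma>" "?z \<in> \<Gamma>"
    using edge_at_in_points[OF e] \<sigma> by auto
  have d: "\<rho> ?x ?y = \<sigma>\<^sub>2 - \<sigma>\<^sub>1" "\<rho> ?y ?z = \<sigma>\<^sub>2 - \<sigma>" "\<rho> ?x ?z = \<sigma> - \<sigma>\<^sub>1"
    using gdist_edge_at[OF e] \<sigma> by auto
  have "?x \<noteq> ?y" using d(1) gdist_self[OF P(1)] \<sigma> by auto
  moreover have "on_geodesic V E l ?x ?y ?z"
    using \<sigma> by (intro on_geodesic_edge_at[OF e]) auto
  ultimately show ?thesis using u P unfolding graph_convex_def d[symmetric] by blast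
qed

lemma graph_convex_affine:
  assumes \<phi>: "graph_convex V E l \<phi>" and "K \<ge> 0"
  shows "graph_convex V E l (\<lambda>p. c + K * \<phi> p)"
  unfolding graph_convex_def
proof (intro ballI allI impI)
  fix x y z assume x: "x \<in> \<Gamma>" and y: "y \<in> \<Gamma>" and h: "x \<noteq> y \<and> on_geodesic V E l x y z"
  define \<alpha> \<beta> where "\<alpha> = \<rho> y z / \<rho> x y" and "\<beta> = \<rho> x z / \<rho> x y"
  have z: "z \<in> \<Gamma>" and geo: "\<rho> x z + \<rho> z y = \<rho> x y"
    using h unfolding on_geodesic_def by auto
  have "\<alpha> + \<beta> = 1"
    using geo gdist_sym[OF z y] gdist_pos[OF x y] h unfolding \<alpha>_def \<beta>_def by (simp add: field_simps)
  have "\<phi> z \<le> \<alpha> * \<phi> x + \<beta> * \<phi> y"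
    using \<phi> x y h unfolding graph_convex_def \<alpha>_def \<beta>_def by blast
  then have "c + K * \<phi> z \<le> (\<alpha> + \<beta>) * c + K * (\<alpha> * \<phi> x + \<beta> * \<phi> y)"
    using \<open>K \<ge> 0\<close> \<open>\<alpha> + \<beta> = 1\<close> by (simp add: mult_left_mono)
  then show "c + K * \<phi> z \<le> \<alpha> * (c + K * \<phi> x) + \<beta> * (c + K * \<phi> y)"
    by (simp add: algebra_simps)
qed

lemma graph_convex_const: "graph_convex V E l (\<lambda>p. c)"
  using graph_convex_affine[of "\<lambda>p. 0" 0 c] by (simp add: graph_convex_def)

lemma convex_le_Max_Vtx:
  assumes u: "graph_convex V E l u" and p: "p \<in> \<Gamma>"
  shows "u p \<le> Max ((\<lambda>a. u (Vtx a)) ` V)"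
proof (cases p)
  case (Vtx a)
  then show ?thesis using p finite_V by auto
next
  case (Edg e t)
  let ?m = "Max ((\<lambda>a. u (Vtx a)) ` V)"
  let ?v = "fst e"
  have h: "incident e ?v" "edge_at e ?v t = p" "0 < t" "t < l e"
    using Edg_eq_edge_at p Edg by auto
  have "u p = u (edge_at e ?v t)" using h by simp
  also have "\<dots> \<le> (l e - t) / (l e - 0) * u (edge_at e ?v 0) + (t - 0) / (l e - 0) * u (edge_at e ?v (l e))"
    using h by (intro convex_along_edge[OF u h(1)]) auto
  also have "\<dots> = (l e - t) / l e * u (Vtx ?v) + t / l e * u (Vtx (other_end e ?v))"
    using edge_at_0[OF h(1)] edge_at_length[OF h(1)] by simp
  also have "\<dots> \<le> ?m"
    using incident_in_V[OF h(1)] finite_V h(3,4)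
    by (intro convex_bound_le) (auto simp: field_simps)
  finally show ?thesis .
qed

text \<open>Since z \<noteq> y, the convexity inequality at z gives u x a positive weight.\<close>

lemma convex_max_at_geodesic_endpoint:
  assumes u: "graph_convex V E l u" and ub: "\<forall>p\<in>\<Gamma>. u p \<le> m"
    and x: "x \<in> \<Gamma>" and y: "y \<in> \<Gamma>" and "x \<noteq> y" and geo: "on_geodesic V E l x y z"
    and "z \<noteq> y" and "u z = m"
  shows "u x = m"
proof -
  define \<alpha> \<beta> where "\<alpha> = \<rho> y z / \<rho> x y" and "\<beta> = \<rho> x z / \<rho> x y"
  have z: "z \<in> \<Gamma>" using geo unfolding on_geodesic_def by auto
  have "\<alpha> > 0" "\<beta> \<ge> 0"
    using gdist_pos[OF y z] gdist_pos[OF x y] gdist_nonneg[OF x z] \<open>x \<noteq> y\<close> \<open>z \<noteq> y\<close>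
    unfolding \<alpha>_def \<beta>_def by auto
  have "\<alpha> + \<beta> = 1"
    using geo gdist_sym[OF z y] gdist_pos[OF x y] \<open>x \<noteq> y\<close>
    unfolding on_geodesic_def \<alpha>_def \<beta>_def by (simp add: field_simps)
  have "m \<le> \<alpha> * u x + \<beta> * u y"
    using u x y \<open>x \<noteq> y\<close> geo \<open>u z = m\<close> unfolding graph_convex_def \<alpha>_def \<beta>_def by blast
  also have "\<dots> \<le> \<alpha> * u x + \<beta> * m"
    using ub y \<open>\<beta> \<ge> 0\<close> by (simp add: mult_left_mono)
  finally have "(\<alpha> + \<beta>) * m \<le> \<alpha> * u x + \<beta> * m"
    using \<open>\<alpha> + \<beta> = 1\<close> by simp
  then have "\<alpha> * m \<le> \<alpha> * u x"
    by (simp add: distrib_right)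
  then show ?thesis using \<open>\<alpha> > 0\<close> ub x by (simp add: order_antisym)
qed

text \<open>At a non-terminal vertex v there is a second edge, and v is the midpoint of the geodesic
  joining the points at distance \<delta> from v on the two edges.\<close>

lemma convex_max_spreads_from_nonterminal:
  assumes u: "graph_convex V E l u" and ub: "\<forall>p\<in>\<Gamma>. u p \<le> m"
    and v: "v \<in> V" "u (Vtx v) = m" "\<not> terminal V E v" and e: "incident e v"
    and \<sigma>: "0 < \<sigma>" "\<sigma> \<le> l e"
  shows "u (edge_at e v \<sigma>) = m"
proof -
  obtain e' where e': "incident e' v" "e' \<noteq> e"
    using obtain_other_incident[OF v(1,3) e] .
  define \<delta> where "\<delta> = min \<sigma> (min (l e) (l e') / 2) / 2"
  have \<delta>: "0 < \<delta>" "\<delta> < \<sigma>" "2 * \<delta> \<le> l e" "2 * \<delta> \<le> l e'"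
    using \<sigma> incident_length_pos[OF e] incident_length_pos[OF e'(1)] unfolding \<delta>_def by auto
  let ?x = "edge_at e v \<delta>" and ?y = "edge_at e' v \<delta>"
  have P: "?x \<in> \<Gamma>" "?y \<in> \<Gamma>" "edge_at e v \<sigma> \<in> \<Gamma>" "Vtx v \<in> \<Gamma>"
    using edge_at_in_points[OF e] edge_at_in_points[OF e'(1)] \<delta> \<sigma> v(1) by auto
  have "\<rho> ?x ?y = 2 * \<delta>"
    using gdist_edge_at_across[OF e e'(1)] e'(2) \<delta> by auto
  moreover have "\<rho> ?x (Vtx v) = \<delta>" "\<rho> (Vtx v) ?y = \<delta>"
    using gdist_edge_at[OF e, of \<delta> 0] gdist_edge_at[OF e'(1), of 0 \<delta>] \<delta>
    by (auto simp: edge_at_0[OF e] edge_at_0[OF e'(1)])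
  ultimately have "on_geodesic V E l ?x ?y (Vtx v)" "?x \<noteq> ?y" "Vtx v \<noteq> ?y"
    using P gdist_self \<delta>(1) unfolding on_geodesic_def by auto
  then have "u ?x = m"
    using convex_max_at_geodesic_endpoint[OF u ub P(1,2)] v(2) by blast
  have "on_geodesic V E l (edge_at e v \<sigma>) (edge_at e v 0) ?x"
    using \<delta> \<sigma> by (intro on_geodesic_edge_at[OF e]) auto
  moreover have "?x \<noteq> edge_at e v 0" "edge_at e v \<sigma> \<noteq> edge_at e v 0"
    using gdist_edge_at[OF e, of \<delta> 0] gdist_edge_at[OF e, of \<sigma> 0] gdist_self P \<delta> \<sigma> by force+
  ultimately show ?thesis
    using convex_max_at_geodesic_endpoint[OF u ub P(3)] \<open>u ?x = m\<close> edge_at_0[OF e] P(4) by metis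
qed

lemma convex_max_everywhere:
  assumes u: "graph_convex V E l u" and ub: "\<forall>p\<in>\<Gamma>. u p \<le> m"
    and v: "v \<in> V" "u (Vtx v) = m" and no_terminal: "\<forall>a\<in>V. u (Vtx a) = m \<longrightarrow> \<not> terminal V E a"
    and p: "p \<in> \<Gamma>"
  shows "u p = m"
proof -
  have max_along: "u (edge_at e a \<sigma>) = m"
    if "a \<in> V" "u (Vtx a) = m" "incident e a" "0 < \<sigma>" "\<sigma> \<le> l e" for a e \<sigma>
    using convex_max_spreads_from_nonterminal[OF u ub] no_terminal that by blast
  have max_Vtx: "u (Vtx b) = m" if "b \<in> V" for b
    using connected v(1) that v(2)
  proof (rule connected_adjacency_closed)
    fix a b assume "a \<in> V" "u (Vtx a) = m" "adjacent E a b"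
    then obtain e where "incident e a" "other_end e a = b"
      using adjacent_incident by blast
    then show "u (Vtx b) = m"
      using max_along[OF \<open>a \<in> V\<close> \<open>u (Vtx a) = m\<close>, of e "l e"] incident_length_pos edge_at_length
      by auto
  qed
  show ?thesis
  proof (cases p)
    case (Vtx a)
    then show ?thesis using p max_Vtx by simp
  next
    case (Edg e t)
    then have "incident e (fst e)" "edge_at e (fst e) t = p" "0 < t" "t < l e"
      using Edg_eq_edge_at p by auto
    then show ?thesis using max_along[of "fst e" e t] max_Vtx incident_in_V by auto
  qed
qed

lemma convex_minorant_le_Sup:
  assumes u: "graph_convex V E l u" and uA: "\<forall>a\<in>A. u a \<le> f a" and fS: "\<forall>a\<in>A. f a \<le> S"
    and terminals: "\<forall>v. terminal V E v \<longrightarrow> Vtx v \<in> A" and "A \<subseteq> \<Gamma>" "A \<noteq> {}"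
    and x: "x \<in> \<Gamma>"
  shows "u x \<le> S"
proof -
  obtain a where a: "a \<in> A" "a \<in> \<Gamma>" using \<open>A \<subseteq> \<Gamma>\<close> \<open>A \<noteq> {}\<close> by auto
  have "V \<noteq> {}"
    using a(2) unfolding points_def by (auto dest: E_subset[THEN subsetD])
  define m where "m = Max ((\<lambda>a. u (Vtx a)) ` V)"
  have ub: "\<forall>p\<in>\<Gamma>. u p \<le> m" using convex_le_Max_Vtx[OF u] unfolding m_def by auto
  have "m \<le> S"
  proof (rule ccontr)
    assume "\<not> m \<le> S"
    have "m \<in> (\<lambda>a. u (Vtx a)) ` V" unfolding m_def using finite_V \<open>V \<noteq> {}\<close> by simp
    then obtain v where "v \<in> V" "u (Vtx v) = m" by auto
    moreover have "\<forall>b\<in>V. u (Vtx b) = m \<longrightarrow> \<not> terminal V E b"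
      using terminals uA fS \<open>\<not> m \<le> S\<close> by force
    ultimately have "u a = m" using convex_max_everywhere[OF u ub] a(2) by blast
    then show False using uA fS a(1) \<open>\<not> m \<le> S\<close> by force
  qed
  then show ?thesis using ub x by force
qed

lemma convex_envelope_ge:
  assumes "\<forall>a\<in>A. c \<le> f a"
  shows "ereal c \<le> convex_envelope V E l A f x"
  unfolding convex_envelope_def using graph_convex_const assms
  by (intro SUP_upper2[of "\<lambda>p. c"]) auto

lemma convex_envelope_le:
  assumes "\<forall>a\<in>A. f a \<le> S" "\<forall>v. terminal V E v \<longrightarrow> Vtx v \<in> A" "A \<subseteq> \<Gamma>" "A \<noteq> {}" "x \<in> \<Gamma>"
  shows "convex_envelope V E l A f x \<le> ereal S"
  unfolding convex_envelope_def
proof (rule SUP_least)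
  fix u assume "u \<in> {u. graph_convex V E l u \<and> (\<forall>a\<in>A. u a \<le> f a)}"
  then show "ereal (u x) \<le> ereal S" using convex_minorant_le_Sup[of u A f S x] assms by simp
qed

end

lemma max_0_diff_le_interpolation:
  fixes a b s r :: real
  assumes "a \<noteq> b" and between: "\<bar>a - s\<bar> + \<bar>s - b\<bar> = \<bar>a - b\<bar>"
  shows "max 0 (r - s) \<le> \<bar>b - s\<bar> / \<bar>a - b\<bar> * max 0 (r - a) + \<bar>a - s\<bar> / \<bar>a - b\<bar> * max 0 (r - b)"
proof -
  have ordered: "max 0 (r - s) \<le> (b' - s) / (b' - a') * max 0 (r - a') + (s - a') / (b' - a') * max 0 (r - b')"
    if "a' < b'" "a' \<le> s" "s \<le> b'" for a' b'
  proof -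
    let ?\<alpha> = "(b' - s) / (b' - a')" and ?\<beta> = "(s - a') / (b' - a')"
    have "(b' - s) * (r - a') + (s - a') * (r - b') = (r - s) * (b' - a')"
      by (simp add: algebra_simps)
    then have "?\<alpha> * (r - a') + ?\<beta> * (r - b') = r - s"
      using that by (simp add: add_divide_distrib[symmetric])
    moreover have "?\<alpha> \<ge> 0" "?\<beta> \<ge> 0"
      using that by auto
    moreover have "?\<alpha> * (r - a') \<le> ?\<alpha> * max 0 (r - a')" "?\<beta> * (r - b') \<le> ?\<beta> * max 0 (r - b')"
      using \<open>?\<alpha> \<ge> 0\<close> \<open>?\<beta> \<ge> 0\<close> by (intro mult_left_mono; simp)+
    moreover have "0 \<le> ?\<alpha> * max 0 (r - a')" "0 \<le> ?\<beta> * max 0 (r - b')"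
      using \<open>?\<alpha> \<ge> 0\<close> \<open>?\<beta> \<ge> 0\<close> by (intro mult_nonneg_nonneg; simp)+
    ultimately show ?thesis by linarith
  qed
  show ?thesis
  proof (cases "a < b")
    case True
    with between ordered[of a b] show ?thesis by (simp add: abs_if split: if_splits)
  next
    case False
    with \<open>a \<noteq> b\<close> between ordered[of b a] show ?thesis
      by (simp add: abs_if add.commute split: if_splits)
  qed
qed

lemma ereal_abs_le_between: "ereal c \<le> x \<Longrightarrow> x \<le> ereal s \<Longrightarrow> \<bar>x\<bar> \<le> ereal (\<bar>c\<bar> + \<bar>s\<bar>)"
  by (cases x) auto

locale terminal_vertex = connected_metric_graph +
  fixes v
  assumes terminal: "terminal V E v"
begin

definition pendant_edge where "pendant_edge = (THE e. incident e v)"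
definition neighbour where "neighbour = other_end pendant_edge v"
definition pendant_length :: real where "pendant_length = l pendant_edge"
abbreviation pendant_pt where "pendant_pt \<equiv> edge_at pendant_edge v"

lemma terminal_in_V: "v \<in> V"
  using terminal unfolding terminal_def by auto

lemma incident_unique: "\<exists>!e. incident e v"
proof -
  have "card {e \<in> E. fst e = v \<or> snd e = v} = 1"
    using terminal unfolding terminal_def degree_def by auto
  then obtain e where "{e \<in> E. fst e = v \<or> snd e = v} = {e}"
    by (rule card_1_singletonE)
  then show ?thesis unfolding incident_def by (metis (mono_tags, lifting) mem_Collect_eq singletonD singletonI)
qed

lemma incident_pendant_edge: "incident pendant_edge v"
  unfolding pendant_edge_def using incident_unique by (rule theI')

lemma incident_eq_pendant_edge: "incident e v \<Longrightarrow> e = pendant_edge"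
  using incident_unique incident_pendant_edge by blast

lemma pendant_length_pos: "pendant_length > 0"
  using incident_length_pos[OF incident_pendant_edge] unfolding pendant_length_def .

lemma neighbour_in_V: "neighbour \<in> V"
  using incident_in_V[OF incident_pendant_edge] unfolding neighbour_def by auto

lemma pendant_pt_0: "pendant_pt 0 = Vtx v"
  using edge_at_0[OF incident_pendant_edge] .

lemma pendant_pt_length: "pendant_pt pendant_length = Vtx neighbour"
  using edge_at_length[OF incident_pendant_edge] unfolding neighbour_def pendant_length_def .

lemma pendant_pt_in_points: "\<sigma> \<in> {0..pendant_length} \<Longrightarrow> pendant_pt \<sigma> \<in> \<Gamma>"
  using edge_at_in_points[OF incident_pendant_edge] unfolding pendant_length_def .

lemma gdist_pendant_pts:
  "\<sigma> \<in> {0..pendant_length} \<Longrightarrow> \<tau> \<in> {0..pendant_length} \<Longrightarrow> \<rho> (pendant_pt \<sigma>) (pendant_pt \<tau>) = \<bar>\<sigma> - \<tau>\<bar>"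
  using gdist_edge_at[OF incident_pendant_edge] unfolding pendant_length_def by blast

lemma adjacent_terminal_eq_neighbour: "adjacent E x v \<Longrightarrow> x = neighbour"
proof -
  assume adj: "adjacent E x v"
  then have "pendant_edge = (x, v) \<or> pendant_edge = (v, x)"
    using incident_eq_pendant_edge[of "(x, v)"] incident_eq_pendant_edge[of "(v, x)"]
    unfolding adjacent_def incident_def by auto
  moreover have "x \<noteq> v" using adj edge_irrefl unfolding adjacent_def by auto
  ultimately show "x = neighbour" unfolding neighbour_def other_end_def by auto
qed

lemma adjacent_neighbour: "adjacent E neighbour v"
  using incident_pendant_edge unfolding neighbour_def other_end_def incident_def adjacent_def
  by (cases pendant_edge) auto

lemma wlen_neighbour: "wlen E l neighbour v = pendant_length"
  using incident_pendant_edge edge_asym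
  unfolding neighbour_def other_end_def incident_def wlen_def pendant_length_def
  by (cases pendant_edge) auto

text \<open>Every walk into a terminal vertex ends with the pendant edge.\<close>

lemma vdist_to_terminal:
  assumes u: "u \<in> V" "u \<noteq> v"
  shows "vdist V E l u v = vdist V E l u neighbour + pendant_length"
proof (rule antisym)
  have "vdist V E l neighbour v \<le> walk_length E l [neighbour, v]"
    by (rule vdist_le_walk_length) (auto simp: neighbour_in_V terminal_in_V adjacent_neighbour)
  then have "vdist V E l neighbour v \<le> pendant_length"
    by (simp add: wlen_neighbour)
  then show "vdist V E l u v \<le> vdist V E l u neighbour + pendant_length"
    using vdist_triangle[OF u(1) neighbour_in_V terminal_in_V] by linarith
next
  show "vdist V E l u neighbour + pendant_length \<le> vdist V E l u v"
  proof (rule vdist_greatest[OF u(1) terminal_in_V])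
    fix xs assume xs: "is_walk V E xs" "hd xs = u" "last xs = v"
    define ys where "ys = butlast xs"
    have xs_eq: "xs = ys @ [v]" and "ys \<noteq> []"
      using xs u unfolding ys_def by (cases xs rule: rev_cases; auto)+
    then have ys: "is_walk V E ys" "adjacent E (last ys) v" "hd ys = u"
      "walk_length E l xs = walk_length E l ys + wlen E l (last ys) v"
      using walk_snoc[of V E ys v l] xs by auto
    then have "last ys = neighbour" by (simp add: adjacent_terminal_eq_neighbour)
    with ys show "vdist V E l u neighbour + pendant_length \<le> walk_length E l xs"
      using vdist_le_walk_length[OF ys(1)] wlen_neighbour by simp
  qed
qed

definition off_pendant where
  "off_pendant p \<longleftrightarrow> p \<in> \<Gamma> \<and> (\<forall>\<sigma>\<in>{0..pendant_length}. p \<noteq> pendant_pt \<sigma>)"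

lemma off_pendant_not_Edg: "off_pendant p \<Longrightarrow> p \<noteq> Edg pendant_edge t"
proof
  assume off: "off_pendant p" and p: "p = Edg pendant_edge t"
  then have t: "0 < t" "t < pendant_length"
    unfolding off_pendant_def points_def pendant_length_def by auto
  let ?\<sigma> = "if fst pendant_edge = v then t else pendant_length - t"
  have "pendant_pt ?\<sigma> = p" "?\<sigma> \<in> {0..pendant_length}"
    using t p unfolding edge_at_def edge_pt_def pendant_length_def by auto
  with off show False unfolding off_pendant_def by blast
qed

lemma off_pendant_ends: "off_pendant p \<Longrightarrow> (x, r) \<in> ends l p \<Longrightarrow> x \<noteq> v"
proof (cases p)
  case (Vtx a)
  moreover assume "off_pendant p" "(x, r) \<in> ends l p"
  ultimately show ?thesis
    using pendant_length_pos pendant_pt_0 unfolding off_pendant_def by force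
next
  case (Edg e t)
  moreover assume off: "off_pendant p" and "(x, r) \<in> ends l p"
  moreover have "e \<noteq> pendant_edge" "e \<in> E"
    using off off_pendant_not_Edg[OF off, of t] Edg unfolding off_pendant_def points_def by auto
  ultimately show ?thesis using incident_eq_pendant_edge[of e] unfolding incident_def by auto
qed

lemma pendant_pt_cases:
  "(\<exists>a. pendant_pt \<sigma> = Vtx a) \<or> (\<exists>t. pendant_pt \<sigma> = Edg pendant_edge t)"
  unfolding edge_at_def edge_pt_def by auto

lemma ends_pendant_pt:
  assumes "\<sigma> \<in> {0..pendant_length}"
  shows "ends l (pendant_pt \<sigma>) \<subseteq> {(v, \<sigma>), (neighbour, pendant_length - \<sigma>)}"
proof -
  consider "\<sigma> = 0" | "\<sigma> = pendant_length" | "0 < \<sigma>" "\<sigma> < pendant_length"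
    using assms by force
  then show ?thesis
    by cases (use pendant_pt_0 pendant_pt_length edge_at_interior[OF incident_pendant_edge, of \<sigma>]
        in \<open>auto simp: neighbour_def pendant_length_def\<close>)
qed

lemma neighbour_in_ends_pendant_pt:
  assumes "0 < \<sigma>" "\<sigma> \<le> pendant_length"
  shows "(neighbour, pendant_length - \<sigma>) \<in> ends l (pendant_pt \<sigma>)"
proof (cases "\<sigma> = pendant_length")
  case True
  then show ?thesis using pendant_pt_length by simp
next
  case False
  then show ?thesis using edge_at_interior[OF incident_pendant_edge, of \<sigma>] assms
    unfolding neighbour_def pendant_length_def by auto
qed

text \<open>A point off the pendant edge reaches that edge only through the neighbour.\<close>

lemma gdist_off_pendant:
  assumes off: "off_pendant p" and \<sigma>: "\<sigma> \<in> {0..pendant_length}"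
  shows "\<rho> p (pendant_pt \<sigma>) = \<rho> p (Vtx neighbour) + pendant_length - \<sigma>"
proof -
  have p: "p \<in> \<Gamma>" using off unfolding off_pendant_def by auto
  have "\<rho> p (pendant_pt \<sigma>) = via_dist p (pendant_pt \<sigma>)"
  proof (rule gdist_via_dist, clarify)
    fix e t s assume "p = Edg e t" "pendant_pt \<sigma> = Edg e s"
    then show False
      using pendant_pt_cases[of \<sigma>] off_pendant_not_Edg[OF off, of t] by auto
  qed
  moreover have "\<rho> p (Vtx neighbour) = via_dist p (Vtx neighbour)"
    by (intro gdist_via_dist) auto
  moreover obtain x r w s where x: "(x, r) \<in> ends l p" and "(w, s) \<in> ends l (Vtx neighbour)"
      and "via_dist p (Vtx neighbour) = r + vdist V E l x w + s"
    by (rule via_dist_attained)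
  then have via_x: "via_dist p (Vtx neighbour) = r + vdist V E l x neighbour"
    by simp
  have "x \<in> V" "x \<noteq> v" using ends_in_V[OF p x] off_pendant_ends[OF off x] by auto
  have "via_dist p (pendant_pt \<sigma>) \<le> via_dist p (Vtx neighbour) + pendant_length - \<sigma>"
  proof (cases "\<sigma> = 0")
    case True
    have "via_dist p (pendant_pt \<sigma>) \<le> r + vdist V E l x v + 0"
      using True pendant_pt_0 by (intro via_dist_le[OF x]) auto
    then show ?thesis using vdist_to_terminal[OF \<open>x \<in> V\<close> \<open>x \<noteq> v\<close>] via_x True by simp
  next
    case False
    then have "via_dist p (pendant_pt \<sigma>) \<le> r + vdist V E l x neighbour + (pendant_length - \<sigma>)"
      using \<sigma> neighbour_in_ends_pendant_pt[of \<sigma>] by (intro via_dist_le[OF x]) auto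
    then show ?thesis using via_x by simp
  qed
  moreover have "via_dist p (Vtx neighbour) + pendant_length - \<sigma> \<le> via_dist p (pendant_pt \<sigma>)"
  proof (rule via_dist_greatest)
    fix y r' z s' assume y: "(y, r') \<in> ends l p" and z: "(z, s') \<in> ends l (pendant_pt \<sigma>)"
    have "y \<in> V" "y \<noteq> v" using ends_in_V[OF p y] off_pendant_ends[OF off y] by auto
    have le: "via_dist p (Vtx neighbour) \<le> r' + vdist V E l y neighbour + 0"
      by (rule via_dist_le[OF y]) auto
    from z ends_pendant_pt[OF \<sigma>] consider "(z, s') = (v, \<sigma>)" | "(z, s') = (neighbour, pendant_length - \<sigma>)"
      by auto
    then show "via_dist p (Vtx neighbour) + pendant_length - \<sigma> \<le> r' + vdist V E l y z + s'"
      by cases (use le vdist_to_terminal[OF \<open>y \<in> V\<close> \<open>y \<noteq> v\<close>] \<sigma> in auto)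
  qed
  ultimately show ?thesis by linarith
qed

text \<open>Seen from the pendant edge, the metric graph is a half-line with coordinate \<open>d(v, \<cdot>)\<close>.\<close>

lemma gdist_pendant_pt:
  assumes p: "p \<in> \<Gamma>" and \<sigma>: "\<sigma> \<in> {0..pendant_length}"
  shows "\<rho> p (pendant_pt \<sigma>) = \<bar>\<rho> (Vtx v) p - \<sigma>\<bar>"
proof (cases "off_pendant p")
  case True
  have "\<rho> (Vtx v) p = \<rho> p (Vtx neighbour) + pendant_length"
    using gdist_off_pendant[OF True, of 0] gdist_sym[OF _ p] terminal_in_V pendant_length_pos pendant_pt_0
    by simp
  moreover have "\<rho> p (Vtx neighbour) \<ge> 0" using gdist_nonneg[OF p] neighbour_in_V by simp
  ultimately show ?thesis using gdist_off_pendant[OF True \<sigma>] \<sigma> by simp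
next
  case False
  then obtain a where a: "a \<in> {0..pendant_length}" "p = pendant_pt a"
    using p unfolding off_pendant_def by auto
  then have "\<rho> (Vtx v) p = a"
    using gdist_pendant_pts[of 0 a] pendant_pt_0 pendant_length_pos by simp
  then show ?thesis using gdist_pendant_pts[OF a(1) \<sigma>] a(2) by simp
qed

lemma eq_pendant_pt_gdist:
  assumes p: "p \<in> \<Gamma>" and near: "\<rho> (Vtx v) p \<le> pendant_length"
  shows "p = pendant_pt (\<rho> (Vtx v) p)"
proof (rule ccontr)
  have "\<rho> (Vtx v) p \<in> {0..pendant_length}"
    using near gdist_nonneg[OF _ p] terminal_in_V by simp
  moreover assume "p \<noteq> pendant_pt (\<rho> (Vtx v) p)"
  ultimately show False
    using gdist_pendant_pt[OF p] gdist_pos[OF p] pendant_pt_in_points by fastforce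
qed

lemma bump_convex:
  assumes r: "0 < r" "r \<le> pendant_length"
  shows "graph_convex V E l (\<lambda>p. max 0 (r - \<rho> (Vtx v) p))"
  unfolding graph_convex_def
proof (intro ballI allI impI)
  let ?\<tau> = "\<rho> (Vtx v)"
  fix x y z assume x: "x \<in> \<Gamma>" and y: "y \<in> \<Gamma>" and h: "x \<noteq> y \<and> on_geodesic V E l x y z"
  have z: "z \<in> \<Gamma>" and geo: "\<rho> x z + \<rho> z y = \<rho> x y"
    using h unfolding on_geodesic_def by auto
  have nonneg: "0 \<le> \<rho> y z / \<rho> x y * max 0 (r - ?\<tau> x) + \<rho> x z / \<rho> x y * max 0 (r - ?\<tau> y)"
    using gdist_nonneg x y z by simp
  show "max 0 (r - ?\<tau> z) \<le> \<rho> y z / \<rho> x y * max 0 (r - ?\<tau> x) + \<rho> x z / \<rho> x y * max 0 (r - ?\<tau> y)"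
  proof (cases "?\<tau> z < r")
    case False
    with nonneg show ?thesis by simp
  next
    case True
    define s where "s = ?\<tau> z"
    have s: "s \<in> {0..pendant_length}" "s < pendant_length"
      using True r gdist_nonneg[OF _ z] terminal_in_V unfolding s_def by auto
    have "z = pendant_pt s"
      using eq_pendant_pt_gdist[OF z] s unfolding s_def by simp
    then have dz: "\<rho> p z = \<bar>?\<tau> p - s\<bar>" if "p \<in> \<Gamma>" for p
      using gdist_pendant_pt[OF that s(1)] by simp
    have dxy: "\<rho> x y = \<bar>?\<tau> x - ?\<tau> y\<bar>"
    proof (cases "?\<tau> x \<le> pendant_length \<or> ?\<tau> y \<le> pendant_length")
      case True
      then show ?thesis
      proof
        assume "?\<tau> x \<le> pendant_length"
        then have "\<rho> y x = \<bar>?\<tau> y - ?\<tau> x\<bar>"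
          using eq_pendant_pt_gdist[OF x] gdist_pendant_pt[OF y] gdist_nonneg[OF _ x] terminal_in_V
          by (metis Vtx_in_points atLeastAtMost_iff)
        then show ?thesis using gdist_sym[OF x y] by (simp add: abs_minus_commute)
      next
        assume "?\<tau> y \<le> pendant_length"
        then show ?thesis
          using eq_pendant_pt_gdist[OF y] gdist_pendant_pt[OF x] gdist_nonneg[OF _ y] terminal_in_V
          by (metis Vtx_in_points atLeastAtMost_iff)
      qed
    next
      case False
      txt \<open>Two points beyond the neighbour are joined through it more cheaply than through z.\<close>
      have "\<rho> x y \<le> \<rho> x (Vtx neighbour) + \<rho> (Vtx neighbour) y"
        by (rule gdist_triangle_Vtx[OF x y neighbour_in_V])
      also have "\<dots> = (?\<tau> x - pendant_length) + (?\<tau> y - pendant_length)"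
        using gdist_pendant_pt[OF x, of pendant_length] gdist_pendant_pt[OF y, of pendant_length]
          gdist_sym[OF y] neighbour_in_V pendant_length_pos pendant_pt_length False
        by simp
      also have "\<dots> < \<rho> x z + \<rho> z y"
        using dz[OF x] dz[OF y] gdist_sym[OF z y] s False by simp
      finally show ?thesis using geo by simp
    qed
    have "?\<tau> x \<noteq> ?\<tau> y" using dxy gdist_pos[OF x y] h by auto
    moreover have "\<bar>?\<tau> x - s\<bar> + \<bar>s - ?\<tau> y\<bar> = \<bar>?\<tau> x - ?\<tau> y\<bar>"
      using geo dz[OF x] dz[OF y] gdist_sym[OF z y] dxy by (simp add: abs_minus_commute)
    ultimately show ?thesis
      using max_0_diff_le_interpolation[of "?\<tau> x" "?\<tau> y" s r] dz[OF x] dz[OF y] dxy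
      unfolding s_def by (simp add: abs_minus_commute)
  qed
qed

text \<open>Bumps of arbitrary height at v, supported in a ball around v that misses A.\<close>

lemma convex_envelope_terminal_infinite:
  assumes closed: "graph_closed V E l A" and "Vtx v \<notin> A" and lower: "\<forall>a\<in>A. c \<le> f a"
  shows "convex_envelope V E l A f (Vtx v) = \<infinity>"
proof -
  obtain \<epsilon> where "\<epsilon> > 0" and far: "\<forall>a\<in>A. \<epsilon> \<le> \<rho> (Vtx v) a"
    using closed \<open>Vtx v \<notin> A\<close> terminal_in_V unfolding graph_closed_def by (meson not_less Vtx_in_points)
  define r where "r = min \<epsilon> pendant_length"
  have r: "0 < r" "r \<le> pendant_length" "r \<le> \<epsilon>"
    using \<open>\<epsilon> > 0\<close> pendant_length_pos unfolding r_def by auto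
  have "\<exists>u \<in> {u. graph_convex V E l u \<and> (\<forall>a\<in>A. u a \<le> f a)}. ereal (real n) \<le> ereal (u (Vtx v))" for n
  proof
    let ?u = "\<lambda>p. c + (\<bar>c\<bar> + real n) / r * max 0 (r - \<rho> (Vtx v) p)"
    have "graph_convex V E l ?u"
      by (rule graph_convex_affine[OF bump_convex[OF r(1,2)]]) (use r(1) in simp)
    moreover have "\<forall>a\<in>A. max 0 (r - \<rho> (Vtx v) a) = 0" using far r by force
    ultimately show "?u \<in> {u. graph_convex V E l u \<and> (\<forall>a\<in>A. u a \<le> f a)}"
      using lower by simp
    show "ereal (real n) \<le> ereal (?u (Vtx v))"
      using gdist_self terminal_in_V r(1) by simp
  qed
  then show ?thesis unfolding convex_envelope_def by (rule SUP_PInfty)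
qed

end

lemma (in connected_metric_graph) terminal_mem_if_convex_envelope_bounded:
  assumes "graph_closed V E l A" "\<forall>a\<in>A. c \<le> f a"
    and bounded: "\<forall>x\<in>\<Gamma>. \<bar>convex_envelope V E l A f x\<bar> \<le> ereal M" and "terminal V E v"
  shows "Vtx v \<in> A"
proof (rule ccontr)
  interpret terminal_vertex V E l v
    using \<open>terminal V E v\<close> by unfold_locales
  assume "Vtx v \<notin> A"
  then have "convex_envelope V E l A f (Vtx v) = \<infinity>"
    using convex_envelope_terminal_infinite assms(1,2) by blast
  moreover have "\<bar>convex_envelope V E l A f (Vtx v)\<bar> \<le> ereal M"
    using bounded terminal_in_V by simp
  ultimately show False by simp
qed

theorem theorem1p1:
  fixes V :: "'v set" and E :: "('v \<times> 'v) set" and l :: "'v \<times> 'v \<Rightarrow> real"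
    and A :: "'v gpoint set" and f :: "'v gpoint \<Rightarrow> real"
  assumes mg: "metric_graph V E l"
    and conn: "graph_connected V E"
    and deg: "\<forall>v\<in>V. degree E v \<ge> 1"
    and edge_isom: "\<forall>e\<in>E. \<forall>t\<in>{0..l e}. \<forall>s\<in>{0..l e}.
                      gdist V E l (edge_pt l e t) (edge_pt l e s) = \<bar>t - s\<bar>"
    and closedA: "graph_closed V E l A"
    and nonempty: "A \<noteq> {}"
    and bdd: "\<exists>M. \<forall>a\<in>A. \<bar>f a\<bar> \<le> M"
  shows "((\<exists>M. \<forall>x\<in>points V E l. \<bar>convex_envelope V E l A f x\<bar> \<le> ereal M)
           \<longleftrightarrow> (\<forall>v. terminal V E v \<longrightarrow> Vtx v \<in> A))
         \<and> ((\<forall>v. terminal V E v \<longrightarrow> Vtx v \<in> A) \<longrightarrow>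
           (\<forall>x\<in>points V E l. ereal (Inf (f ` A)) \<le> convex_envelope V E l A f x
                          \<and> convex_envelope V E l A f x \<le> ereal (Sup (f ` A))))"
proof -
  interpret connected_metric_graph V E l
    using mg conn deg edge_isom by unfold_locales
  let ?u = "convex_envelope V E l A f"
  obtain M where "\<forall>a\<in>A. \<bar>f a\<bar> \<le> M" using bdd by blast
  then have "bdd_below (f ` A)" "bdd_above (f ` A)"
    by (auto intro!: bdd_belowI[of _ "- M"] bdd_aboveI[of _ M] simp: abs_le_iff)
  then have inf: "\<forall>a\<in>A. Inf (f ` A) \<le> f a" and sup: "\<forall>a\<in>A. f a \<le> Sup (f ` A)"
    by (auto intro: cInf_lower cSup_upper)
  have "A \<subseteq> \<Gamma>" using closedA unfolding graph_closed_def by blast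
  then have bounds: "(\<forall>v. terminal V E v \<longrightarrow> Vtx v \<in> A) \<longrightarrow>
      (\<forall>x\<in>\<Gamma>. ereal (Inf (f ` A)) \<le> ?u x \<and> ?u x \<le> ereal (Sup (f ` A)))"
    using convex_envelope_ge[OF inf] convex_envelope_le[OF sup _ _ nonempty] by blast
  moreover have "\<forall>x\<in>\<Gamma>. \<bar>?u x\<bar> \<le> ereal (\<bar>Inf (f ` A)\<bar> + \<bar>Sup (f ` A)\<bar>)"
    if "\<forall>v. terminal V E v \<longrightarrow> Vtx v \<in> A"
    using bounds that by (blast intro: ereal_abs_le_between)
  moreover note terminal_mem_if_convex_envelope_bounded[OF closedA inf]
  ultimately show ?thesis by blast
qed

end
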